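(* If projections $e$ and $f$ in a generalized Rickart $*$-ring $R$ are very orthogonal, then $e,f$ are orthogonal (i.e. $ef=0$), $GRP(e)\,GLP(f)=0$, and $eRf=0$.
   Context: A $*$-ring is an associative ring $R$ with an involution $x\mapsto x^*$ (additive, $(xy)^*=y^*x^*$, $x^{**}=x$). A projection is an element $e$ with $e=e^*=e^2$. For $a\in R$, $r(a)=\{b: ab=0\}$. $R$ is a generalized Rickart $*$-ring if for every $x$ there exist $n\ge1$ and a projection $g$ with $r(x^n)=gR$. $GRP(x)=e$ means $e$ is a projection and there is $n\in\mathbb N$ with $x^ne=x^n$ and $x^ny=0\Rightarrow ey=0$ for all $y$; $GLP(x)=f$ means $f$ is a projection and there is $n$ with $fx^n=x^n$ and $yx^n=0\Rightarrow yf=0$ for all $y$. Projections $e,f$ are very orthogonal if there is a central projection $h$ with $he=e$ and $hf=0$. *)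

theory Defs
  imports Main
begin

definition involution :: "('a::ring_1 \<Rightarrow> 'a) \<Rightarrow> bool" where
  "involution s \<longleftrightarrow> (\<forall>x y. s (x + y) = s x + s y) \<and> (\<forall>x y. s (x * y) = s y * s x)
     \<and> (\<forall>x. s (s x) = x)"

definition projection :: "('a::ring_1 \<Rightarrow> 'a) \<Rightarrow> 'a \<Rightarrow> bool" where
  "projection s e \<longleftrightarrow> e = s e \<and> e = e * e"

definition rann :: "'a::ring_1 \<Rightarrow> 'a set" where
  "rann a = {b. a * b = 0}"

definition gen_rickart :: "('a::ring_1 \<Rightarrow> 'a) \<Rightarrow> bool" where
  "gen_rickart s \<longleftrightarrow> (\<forall>x. \<exists>n\<ge>1. \<exists>g. projection s g \<and> rann (x ^ n) = (\<lambda>r. g * r) ` UNIV)"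

definition GRP :: "('a::ring_1 \<Rightarrow> 'a) \<Rightarrow> 'a \<Rightarrow> 'a \<Rightarrow> bool" where
  "GRP s x e \<longleftrightarrow> projection s e \<and>
     (\<exists>n\<ge>1. x ^ n * e = x ^ n \<and> (\<forall>y. x ^ n * y = 0 \<longrightarrow> e * y = 0))"

definition GLP :: "('a::ring_1 \<Rightarrow> 'a) \<Rightarrow> 'a \<Rightarrow> 'a \<Rightarrow> bool" where
  "GLP s x f \<longleftrightarrow> projection s f \<and>
     (\<exists>n\<ge>1. f * x ^ n = x ^ n \<and> (\<forall>y. y * x ^ n = 0 \<longrightarrow> y * f = 0))"

definition central :: "'a::ring_1 \<Rightarrow> bool" where
  "central h \<longleftrightarrow> (\<forall>x. h * x = x * h)"

definition very_orthogonal :: "('a::ring_1 \<Rightarrow> 'a) \<Rightarrow> 'a \<Rightarrow> 'a \<Rightarrow> bool" where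
  "very_orthogonal s e f \<longleftrightarrow> (\<exists>h. projection s h \<and> central h \<and> h * e = e \<and> h * f = 0)"

end

theory Submission
  imports Defs
begin

(* Let h be the central projection with h e = e and h f = 0. Centrality gives
   e x f = e x h f = 0. Generalized projections only see annihilators: GRP(e) kills
   whatever e kills, in particular 1 - h, so GRP(e) = GRP(e) h; dually h GLP(f) = 0
   because h f = 0. Hence GRP(e) GLP(f) = GRP(e) h GLP(f) = 0. *)

lemma GRP_right_annihilator:
  assumes "GRP s x p" and "x * y = 0"
  shows "p * y = 0"
proof -
  obtain n where "n \<ge> 1" and kills: "\<forall>y. x ^ n * y = 0 \<longrightarrow> p * y = 0"
    using assms(1) unfolding GRP_def by blast
  then have "x ^ n * y = x ^ (n - 1) * (x * y)"
    by (metis One_nat_def Suc_diff_le diff_Suc_1 mult.assoc power_Suc2)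
  with assms(2) kills show ?thesis by simp
qed

lemma GLP_left_annihilator:
  assumes "GLP s x q" and "y * x = 0"
  shows "y * q = 0"
proof -
  obtain n where "n \<ge> 1" and kills: "\<forall>y. y * x ^ n = 0 \<longrightarrow> y * q = 0"
    using assms(1) unfolding GLP_def by blast
  then have "y * x ^ n = (y * x) * x ^ (n - 1)"
    by (metis One_nat_def Suc_diff_le diff_Suc_1 mult.assoc power_Suc)
  with assms(2) kills show ?thesis by simp
qed

lemma central_separates:
  assumes "central h" and "h * e = e" and "h * f = 0"
  shows "e * x * f = 0"
proof -
  have "e * x * f = h * e * x * f" using assms(2) by simp
  also have "\<dots> = e * x * (h * f)"
    using assms(1) unfolding central_def by (metis mult.assoc)
  finally show ?thesis using assms(3) by simp
qed

lemma central_separates_GRP_GLP: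
  assumes "central h" and "h * e = e" and "h * f = 0"
    and "GRP s e p" and "GLP s f q"
  shows "p * q = 0"
proof -
  have comm: "\<And>x. h * x = x * h" using assms(1) unfolding central_def by blast
  have "e * (1 - h) = 0" using assms(2) comm by (simp add: algebra_simps)
  with assms(4) have "p * (1 - h) = 0" by (rule GRP_right_annihilator)
  then have p_h: "p = p * h" by (simp add: algebra_simps)
  have "h * q = 0" using assms(5,3) by (rule GLP_left_annihilator)
  then have "p * h * q = 0" by (simp add: mult.assoc)
  then show ?thesis using p_h by simp
qed

theorem mainTheorem18:
  fixes s :: "'a::ring_1 \<Rightarrow> 'a" and e f :: 'a
  assumes "involution s" and "gen_rickart s"
    and "projection s e" and "projection s f"
    and "very_orthogonal s e f"
  shows "e * f = 0 \<and> (\<forall>p q. GRP s e p \<and> GLP s f q \<longrightarrow> p * q = 0) \<and> (\<forall>x. e * x * f = 0)"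
proof -
  obtain h where "central h" and "h * e = e" and "h * f = 0"
    using assms(5) unfolding very_orthogonal_def by blast
  then have "\<forall>x. e * x * f = 0" by (blast intro: central_separates)
  moreover from this have "e * f = 0" by (metis mult.right_neutral)
  moreover have "\<forall>p q. GRP s e p \<and> GLP s f q \<longrightarrow> p * q = 0"
    using \<open>central h\<close> \<open>h * e = e\<close> \<open>h * f = 0\<close> central_separates_GRP_GLP by blast
  ultimately show ?thesis by blast
qed

end
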